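(* Let $H\in\mathbb{R}^{n\times n}$ be symmetric positive semi-definite and let $a_1,\dots,a_n\in\mathbb{R}^n$. Define $\Sigma_0=0\in\mathbb{R}^{n\times n}$ and, for $k=1,\dots,n$, $$\Sigma_k=(I-e_ka_k^T)\Sigma_{k-1}(I-a_ke_k^T)+e_ke_k^T,$$ and set $\ell(a_1,\dots,a_n)=\operatorname{tr}(H\Sigma_n)$. Let $H=LDL^T$ with $L$ unit upper triangular and $D$ nonnegative diagonal. Then $\ell$ attains its global minimum over all $(a_1,\dots,a_n)$ when $a_k=Le_k$ (the $k$-th column of $L$) for every $k$, and the minimum value is $\operatorname{tr}(D)$.
   Context: $e_k$ denotes the $k$-th standard basis vector of $\mathbb{R}^n$. A unit upper triangular matrix is an upper triangular matrix with all diagonal entries equal to $1$. *)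

theory Defs
  imports "Jordan_Normal_Form.Matrix"
begin

text \<open>Matrices are n x n JNF matrices; indices are 0-based, so the paper's
  k = 1..n corresponds to k = 0..n-1 here.\<close>

definition mat_trace :: "'a::comm_ring_1 mat \<Rightarrow> 'a" where
  "mat_trace A = (\<Sum>i<dim_row A. A $$ (i, i))"

definition outer_vec :: "'a::comm_ring_1 vec \<Rightarrow> 'a vec \<Rightarrow> 'a mat" where
  "outer_vec u v = mat (dim_vec u) (dim_vec v) (\<lambda>(i, j). u $ i * v $ j)"

definition psd_mat :: "real mat \<Rightarrow> nat \<Rightarrow> bool" where
  "psd_mat H n \<longleftrightarrow> H \<in> carrier_mat n n \<and> H\<^sup>T = H \<and>
     (\<forall>v \<in> carrier_vec n. 0 \<le> v \<bullet> (H *\<^sub>v v))"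

definition unit_upper_triangular :: "real mat \<Rightarrow> nat \<Rightarrow> bool" where
  "unit_upper_triangular L n \<longleftrightarrow> L \<in> carrier_mat n n \<and> upper_triangular L \<and>
     (\<forall>i<n. L $$ (i, i) = 1)"

text \<open>Sigma n a k is the paper's Sigma_k, using a_{j} = a (j-1) and e_j = unit_vec n (j-1).\<close>
primrec Sigma :: "nat \<Rightarrow> (nat \<Rightarrow> real vec) \<Rightarrow> nat \<Rightarrow> real mat" where
  "Sigma n a 0 = 0\<^sub>m n n"
| "Sigma n a (Suc k) =
     (1\<^sub>m n - outer_vec (unit_vec n k) (a k)) * Sigma n a k * (1\<^sub>m n - outer_vec (a k) (unit_vec n k))
     + outer_vec (unit_vec n k) (unit_vec n k)"

definition ell :: "nat \<Rightarrow> real mat \<Rightarrow> (nat \<Rightarrow> real vec) \<Rightarrow> real" where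
  "ell n H a = mat_trace (H * Sigma n a n)"

end

theory Submission
  imports Defs "Jordan_Normal_Form.Determinant"
begin

text \<open>Unrolling the recursion gives \<Sigma>_k = B_k B_k^T with B_0 = 0 and
  B_k = (I - e_k a_k^T) B_(k-1) + e_k e_k^T: the cross terms vanish because column k of B_(k-1) is zero.
  Each step only rewrites row k, so B_n is unit lower triangular, and P = L^T B_n has unit diagonal.
  Hence \<ell> = tr (B_n^T L D L^T B_n) = tr (P^T D P) = \<Sum>_j \<Sum>_l D_ll P_lj^2 \<ge> \<Sum>_j D_jj = tr D.
  For a_k = L e_k one checks B_n L^T = I, so P = I and equality holds.\<close>

lemma outer_vec_carrier [simp, intro]:
  "u \<in> carrier_vec m \<Longrightarrow> v \<in> carrier_vec n \<Longrightarrow> outer_vec u v \<in> carrier_mat m n"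
  by (simp add: outer_vec_def)

lemma outer_vec_dim [simp]:
  "dim_row (outer_vec u v) = dim_vec u" "dim_col (outer_vec u v) = dim_vec v"
  by (simp_all add: outer_vec_def)

lemma outer_vec_index [simp]:
  "i < dim_vec u \<Longrightarrow> j < dim_vec v \<Longrightarrow> outer_vec u v $$ (i, j) = u $ i * v $ j"
  by (simp add: outer_vec_def)

lemma transpose_outer_vec: "(outer_vec u v)\<^sup>T = outer_vec v u"
  by (rule eq_matI) (auto simp: outer_vec_def)

lemma outer_vec_mult_mat:
  assumes "M \<in> carrier_mat (dim_vec v) m"
  shows "outer_vec u v * M = outer_vec u (M\<^sup>T *\<^sub>v v)"
  using assms by (intro eq_matI) (auto simp: outer_vec_def scalar_prod_def sum_distrib_left ac_simps)

lemma mat_mult_outer_vec: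
  assumes "M \<in> carrier_mat m (dim_vec u)"
  shows "M * outer_vec u v = outer_vec (M *\<^sub>v u) v"
  using assms by (intro eq_matI) (auto simp: outer_vec_def scalar_prod_def sum_distrib_left ac_simps)

lemma outer_vec_mult_outer_vec:
  assumes "dim_vec v = dim_vec w"
  shows "outer_vec u v * outer_vec w z = (v \<bullet> w) \<cdot>\<^sub>m outer_vec u z"
  using assms by (intro eq_matI) (auto simp: outer_vec_def scalar_prod_def sum_distrib_left ac_simps)

lemma outer_vec_zero_left [simp]: "outer_vec (0\<^sub>v n) v = 0\<^sub>m n (dim_vec v)"
  by (rule eq_matI) (auto simp: outer_vec_def)

lemma outer_vec_zero_right [simp]: "outer_vec u (0\<^sub>v n) = 0\<^sub>m (dim_vec u) n"
  by (rule eq_matI) (auto simp: outer_vec_def)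

lemma mult_transpose_add_outer_vec:
  fixes U B :: "'a::comm_ring_1 mat"
  assumes U: "U \<in> carrier_mat n n" and B: "B \<in> carrier_mat n n" and e: "e \<in> carrier_vec n"
    and Be: "B *\<^sub>v e = 0\<^sub>v n" and ee: "e \<bullet> e = 1"
  shows "(U * B + outer_vec e e) * (U * B + outer_vec e e)\<^sup>T = U * (B * B\<^sup>T) * U\<^sup>T + outer_vec e e"
proof -
  let ?E = "outer_vec e e"
  have E: "?E \<in> carrier_mat n n" using e by auto
  have UT: "U\<^sup>T \<in> carrier_mat n n" and BT: "B\<^sup>T \<in> carrier_mat n n"
    using U B by auto
  have BE: "B * ?E = 0\<^sub>m n n"
    using B e by (simp add: mat_mult_outer_vec Be)
  have EBT: "?E * B\<^sup>T = 0\<^sub>m n n"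
    using B e by (simp add: outer_vec_mult_mat Be)
  have EE: "?E * ?E = ?E"
    using e by (intro eq_matI) (auto simp: outer_vec_mult_outer_vec ee)
  have "(U * B + ?E) * (U * B + ?E)\<^sup>T = (U * B + ?E) * (B\<^sup>T * U\<^sup>T + ?E)"
    using U B E by (subst transpose_add[of _ n n]) (auto simp: transpose_mult transpose_outer_vec)
  also have "\<dots> = U * B * (B\<^sup>T * U\<^sup>T) + ?E * (B\<^sup>T * U\<^sup>T) + (U * B * ?E + ?E * ?E)"
    using U B E
    by (simp add: add_mult_distrib_mat[of _ n n _ _ n] mult_add_distrib_mat[of _ n n _ n] del: assoc_mult_mat)
  also have "U * B * (B\<^sup>T * U\<^sup>T) = U * (B * B\<^sup>T) * U\<^sup>T"
    using U B by (simp add: assoc_mult_mat[of _ n n _ n _ n])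
  also have "?E * (B\<^sup>T * U\<^sup>T) = 0\<^sub>m n n"
    using U B E by (simp flip: assoc_mult_mat[of _ n n _ n _ n] add: EBT)
  also have "U * B * ?E = 0\<^sub>m n n"
    using U B E by (simp add: BE)
  finally show ?thesis
    using E mult_carrier_mat[OF mult_carrier_mat[OF U mult_carrier_mat[OF B BT]] UT]
    by (simp add: EE)
qed

lemma one_minus_outer_vec_mult:
  fixes M :: "'a::comm_ring_1 mat"
  assumes M: "M \<in> carrier_mat n m" and v: "v \<in> carrier_vec n" and u: "u \<in> carrier_vec n"
  shows "(1\<^sub>m n - outer_vec u v) * M = M - outer_vec u (M\<^sup>T *\<^sub>v v)"
proof -
  have "(1\<^sub>m n - outer_vec u v) * M = 1\<^sub>m n * M - outer_vec u v * M"
    using M u v by (intro minus_mult_distrib_mat) auto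
  moreover have "outer_vec u v * M = outer_vec u (M\<^sup>T *\<^sub>v v)"
    using M v by (intro outer_vec_mult_mat) simp
  ultimately show ?thesis
    using left_mult_one_mat[OF M] by simp
qed

lemma leading_identity_mult_vec:
  fixes v :: "'a::comm_ring_1 vec"
  assumes "v \<in> carrier_vec n"
  shows "mat n n (\<lambda>(i, j). if i = j \<and> i < k then 1 else 0) *\<^sub>v v = vec n (\<lambda>j. if j < k then v $ j else 0)"
  using assms
  by (intro eq_vecI) (auto simp: scalar_prod_def if_distrib[of "\<lambda>x. x * _"] cong: if_cong)

lemma mat_trace_mult_comm:
  fixes A B :: "'a::comm_ring_1 mat"
  assumes "A \<in> carrier_mat n m" and "B \<in> carrier_mat m n"
  shows "mat_trace (A * B) = mat_trace (B * A)"
proof -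
  have "mat_trace (A * B) = (\<Sum>i<n. \<Sum>l<m. A $$ (i, l) * B $$ (l, i))"
    using assms by (simp add: mat_trace_def scalar_prod_def atLeast0LessThan)
  also have "\<dots> = (\<Sum>l<m. \<Sum>i<n. B $$ (l, i) * A $$ (i, l))"
    by (subst sum.swap) (simp add: mult.commute)
  also have "\<dots> = mat_trace (B * A)"
    using assms by (simp add: mat_trace_def scalar_prod_def atLeast0LessThan)
  finally show ?thesis .
qed

lemma diagonal_congruence_index:
  fixes D P :: "'a::comm_ring_1 mat"
  assumes D: "D \<in> carrier_mat n n" "diagonal_mat D" and P: "P \<in> carrier_mat n n" and j: "j < n"
  shows "(P\<^sup>T * (D * P)) $$ (j, j) = (\<Sum>l<n. D $$ (l, l) * P $$ (l, j) ^ 2)"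
proof -
  have DP: "(D * P) $$ (l, j) = D $$ (l, l) * P $$ (l, j)" if l: "l < n" for l
  proof -
    have "(D * P) $$ (l, j) = (\<Sum>m<n. D $$ (l, m) * P $$ (m, j))"
      using D P l j by (simp add: scalar_prod_def atLeast0LessThan)
    also have "\<dots> = (\<Sum>m<n. if m = l then D $$ (l, l) * P $$ (m, j) else 0)"
      using D l by (intro sum.cong) (auto simp: diagonal_mat_def)
    finally show ?thesis
      using l by simp
  qed
  have "(P\<^sup>T * (D * P)) $$ (j, j) = (\<Sum>l<n. P $$ (l, j) * (D * P) $$ (l, j))"
    using D P j by (simp add: scalar_prod_def atLeast0LessThan)
  also have "\<dots> = (\<Sum>l<n. D $$ (l, l) * P $$ (l, j) ^ 2)"
    by (intro sum.cong) (auto simp: DP power2_eq_square)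
  finally show ?thesis .
qed

lemma mat_trace_le_diagonal_congruence:
  fixes D P :: "real mat"
  assumes D: "D \<in> carrier_mat n n" "diagonal_mat D" "\<forall>i<n. 0 \<le> D $$ (i, i)"
    and P: "P \<in> carrier_mat n n" "\<forall>j<n. P $$ (j, j) = 1"
  shows "mat_trace D \<le> mat_trace (P\<^sup>T * (D * P))"
proof -
  have "D $$ (j, j) \<le> (\<Sum>l<n. D $$ (l, l) * P $$ (l, j) ^ 2)" if j: "j < n" for j
  proof -
    have "D $$ (j, j) = D $$ (j, j) * P $$ (j, j) ^ 2"
      using P(2) j by simp
    also have "\<dots> \<le> (\<Sum>l<n. D $$ (l, l) * P $$ (l, j) ^ 2)"
      using j D(3) by (intro member_le_sum) auto
    finally show ?thesis .
  qed
  then have "(\<Sum>j<n. D $$ (j, j)) \<le> (\<Sum>j<n. \<Sum>l<n. D $$ (l, l) * P $$ (l, j) ^ 2)"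
    by (intro sum_mono) simp
  then show ?thesis
    using D P diagonal_congruence_index[OF D(1,2) P(1)] by (simp add: mat_trace_def)
qed

lemma transpose_mult_unit_upper_triangular_diag:
  assumes L: "unit_upper_triangular L n" and B: "unit_upper_triangular B\<^sup>T n" and j: "j < n"
  shows "(L\<^sup>T * B) $$ (j, j) = 1"
proof -
  have Lc: "L \<in> carrier_mat n n" and Bc: "B \<in> carrier_mat n n"
    using L B by (auto simp: unit_upper_triangular_def)
  have "(L\<^sup>T * B) $$ (j, j) = (\<Sum>l<n. L $$ (l, j) * B $$ (l, j))"
    using Lc Bc j by (simp add: scalar_prod_def atLeast0LessThan)
  also have "\<dots> = (\<Sum>l<n. if l = j then 1 else 0)"
  proof (intro sum.cong refl)
    fix l assume l: "l \<in> {..<n}"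
    consider "l < j" | "l = j" | "j < l"
      by linarith
    then show "L $$ (l, j) * B $$ (l, j) = (if l = j then 1 else 0)"
    proof cases
      case 1
      then have "B\<^sup>T $$ (j, l) = 0"
        using B Bc j by (intro upper_triangularD) (auto simp: unit_upper_triangular_def)
      then show ?thesis
        using 1 j l Bc by simp
    next
      case 2
      have "L $$ (j, j) = 1" "B\<^sup>T $$ (j, j) = 1"
        using L B j by (simp_all add: unit_upper_triangular_def)
      then show ?thesis
        using 2 j Bc by simp
    next
      case 3
      then have "L $$ (l, j) = 0"
        using L Lc l by (intro upper_triangularD) (auto simp: unit_upper_triangular_def)
      then show ?thesis
        using 3 by simp
    qed
  qed
  finally show ?thesis
    using j by simp
qed

primrec Sigma_factor :: "nat \<Rightarrow> (nat \<Rightarrow> real vec) \<Rightarrow> nat \<Rightarrow> real mat" where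
  "Sigma_factor n a 0 = 0\<^sub>m n n"
| "Sigma_factor n a (Suc k) =
     (1\<^sub>m n - outer_vec (unit_vec n k) (a k)) * Sigma_factor n a k + outer_vec (unit_vec n k) (unit_vec n k)"

lemma Sigma_factor_dim [simp]:
  "dim_row (Sigma_factor n a k) = n" "dim_col (Sigma_factor n a k) = n"
  by (induction k) simp_all

lemma Sigma_factor_carrier [simp]: "Sigma_factor n a k \<in> carrier_mat n n"
  by (rule carrier_matI) simp_all

lemma Sigma_factor_shape:
  assumes "k \<le> n" and "\<forall>j<k. a j \<in> carrier_vec n"
  shows "(\<forall>i<n. \<forall>j<n. (k \<le> i \<or> i < j) \<longrightarrow> Sigma_factor n a k $$ (i, j) = 0) \<and>
    (\<forall>i<k. Sigma_factor n a k $$ (i, i) = 1)"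
  using assms
proof (induction k)
  case 0
  show ?case by simp
next
  case (Suc k)
  let ?B = "Sigma_factor n a k"
  have k: "k < n" and ak: "a k \<in> carrier_vec n"
    using Suc.prems by auto
  have zero: "\<forall>i<n. \<forall>j<n. (k \<le> i \<or> i < j) \<longrightarrow> ?B $$ (i, j) = 0"
    and one: "\<forall>i<k. ?B $$ (i, i) = 1"
    using Suc.IH Suc.prems by simp_all
  have entry: "Sigma_factor n a (Suc k) $$ (i, j) =
      ?B $$ (i, j) + (if i = k then (if j = k then 1 else 0) - col ?B j \<bullet> a k else 0)"
    if "i < n" "j < n" for i j
    using that k ak by (simp add: one_minus_outer_vec_mult[of _ n n])
  have col_zero: "col ?B j \<bullet> a k = 0" if j: "j < n" "k \<le> j" for j
  proof -
    have "?B $$ (i, j) = 0" if "i < n" for i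
      using zero j that by (cases "k \<le> i") auto
    then show ?thesis
      using j ak by (simp add: scalar_prod_def)
  qed
  show ?case
    using zero one col_zero k by (auto simp del: Sigma_factor.simps simp: entry)
qed

lemma Sigma_factor_mult_unit_vec:
  assumes "k < n" and "\<forall>j<k. a j \<in> carrier_vec n"
  shows "Sigma_factor n a k *\<^sub>v unit_vec n k = 0\<^sub>v n"
proof (rule eq_vecI)
  fix i assume "i < dim_vec (0\<^sub>v n :: real vec)"
  then show "(Sigma_factor n a k *\<^sub>v unit_vec n k) $ i = 0\<^sub>v n $ i"
    using Sigma_factor_shape[of k n a] assms by (cases "k \<le> i") auto
qed simp

lemma Sigma_eq_Sigma_factor:
  assumes "k \<le> n" and "\<forall>j<k. a j \<in> carrier_vec n"
  shows "Sigma n a k = Sigma_factor n a k * (Sigma_factor n a k)\<^sup>T"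
  using assms
proof (induction k)
  case 0
  show ?case by (auto simp: scalar_prod_def)
next
  case (Suc k)
  let ?U = "1\<^sub>m n - outer_vec (unit_vec n k) (a k)"
  have ak: "a k \<in> carrier_vec n"
    using Suc.prems by simp
  have U: "?U \<in> carrier_mat n n"
    using ak by auto
  have UT: "?U\<^sup>T = 1\<^sub>m n - outer_vec (a k) (unit_vec n k)"
    using ak by (subst transpose_minus[of _ n n]) (auto simp: transpose_outer_vec)
  have "Sigma_factor n a (Suc k) * (Sigma_factor n a (Suc k))\<^sup>T
      = ?U * (Sigma_factor n a k * (Sigma_factor n a k)\<^sup>T) * ?U\<^sup>T + outer_vec (unit_vec n k) (unit_vec n k)"
    unfolding Sigma_factor.simps
    using Sigma_factor_mult_unit_vec[of k n a] Suc.prems by (intro mult_transpose_add_outer_vec U) auto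
  then show ?case
    using Suc by (simp add: UT)
qed

lemma Sigma_factor_col_mult_transpose:
  assumes L: "unit_upper_triangular L n" and "k \<le> n"
  shows "Sigma_factor n (col L) k * L\<^sup>T = mat n n (\<lambda>(i, j). if i = j \<and> i < k then 1 else 0)"
  using assms(2)
proof (induction k)
  case 0
  show ?case
    using L by (auto simp: unit_upper_triangular_def)
next
  case (Suc k)
  have Lc: "L \<in> carrier_mat n n" and up: "upper_triangular L" and diag: "\<forall>i<n. L $$ (i, i) = 1"
    using L by (auto simp: unit_upper_triangular_def)
  let ?e = "unit_vec n k"
  let ?G = "mat n n (\<lambda>(i, j). if i = j \<and> i < k then 1 else 0) :: real mat"
  have k: "k < n" using Suc.prems by simp
  have a: "col L k \<in> carrier_vec n"
    using Lc k by simp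
  have U: "1\<^sub>m n - outer_vec ?e (col L k) \<in> carrier_mat n n"
    using a by (intro minus_carrier_mat outer_vec_carrier) auto
  have E: "outer_vec ?e ?e \<in> carrier_mat n n"
    by auto
  have LT: "L\<^sup>T \<in> carrier_mat n n"
    using Lc by simp
  have "?G\<^sup>T = ?G"
    by (rule eq_matI) auto
  then have G_col: "?G\<^sup>T *\<^sub>v col L k = vec n (\<lambda>j. if j < k then L $$ (j, k) else 0)"
    using a Lc k by (auto simp: leading_identity_mult_vec)
  have L_unit: "L *\<^sub>v ?e = col L k"
    by (rule eq_vecI) (use Lc k in auto)
  have "Sigma_factor n (col L) (Suc k) * L\<^sup>T
      = (1\<^sub>m n - outer_vec ?e (col L k)) * (Sigma_factor n (col L) k * L\<^sup>T) + outer_vec ?e ?e * L\<^sup>T"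
    using add_mult_distrib_mat[OF mult_carrier_mat[OF U Sigma_factor_carrier] E LT]
      assoc_mult_mat[OF U Sigma_factor_carrier LT] by simp
  also have "\<dots> = ?G - outer_vec ?e (vec n (\<lambda>j. if j < k then L $$ (j, k) else 0)) + outer_vec ?e (col L k)"
    using Suc Lc k by (simp add: one_minus_outer_vec_mult[of _ n n] outer_vec_mult_mat G_col L_unit)
  also have "\<dots> = mat n n (\<lambda>(i, j). if i = j \<and> i < Suc k then 1 else 0)"
    \<comment> \<open>row k becomes L_jk - [j < k] L_jk, which is [j = k] as L is unit upper triangular\<close>
    using Lc k up diag by (intro eq_matI) auto
  finally show ?case .
qed

lemma Sigma_factor_transpose_unit_upper_triangular:
  assumes "\<forall>k<n. a k \<in> carrier_vec n"
  shows "unit_upper_triangular (Sigma_factor n a n)\<^sup>T n"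
proof -
  have "\<forall>i<n. \<forall>j<n. i < j \<longrightarrow> Sigma_factor n a n $$ (i, j) = 0" "\<forall>i<n. Sigma_factor n a n $$ (i, i) = 1"
    using Sigma_factor_shape[of n n a] assms by auto
  then show ?thesis
    unfolding unit_upper_triangular_def by auto
qed

lemma Sigma_factor_col_inverse:
  assumes "unit_upper_triangular L n"
  shows "L\<^sup>T * Sigma_factor n (col L) n = 1\<^sub>m n"
proof -
  have "mat n n (\<lambda>(i, j). if i = j \<and> i < n then 1 else 0) = (1\<^sub>m n :: real mat)"
    by (rule eq_matI) auto
  then have "Sigma_factor n (col L) n * L\<^sup>T = 1\<^sub>m n"
    using Sigma_factor_col_mult_transpose[OF assms, of n] by simp
  moreover have "L\<^sup>T \<in> carrier_mat n n"
    using assms by (simp add: unit_upper_triangular_def)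
  ultimately show ?thesis
    by (intro mat_mult_left_right_inverse[OF Sigma_factor_carrier])
qed

lemma ell_LDLT:
  assumes L: "L \<in> carrier_mat n n" and D: "D \<in> carrier_mat n n"
    and a: "\<forall>k<n. a k \<in> carrier_vec n"
  defines "P \<equiv> L\<^sup>T * Sigma_factor n a n"
  shows "ell n (L * D * L\<^sup>T) a = mat_trace (P\<^sup>T * (D * P))"
proof -
  let ?B = "Sigma_factor n a n"
  have B: "?B \<in> carrier_mat n n" and BT: "?B\<^sup>T \<in> carrier_mat n n" and LT: "L\<^sup>T \<in> carrier_mat n n"
    using L by auto
  have H: "L * D * L\<^sup>T \<in> carrier_mat n n"
    using L D LT by (meson mult_carrier_mat)
  have "ell n (L * D * L\<^sup>T) a = mat_trace ((L * D * L\<^sup>T * ?B) * ?B\<^sup>T)"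
    unfolding ell_def using Sigma_eq_Sigma_factor[of n n a] a assoc_mult_mat[OF H B BT] by simp
  also have "\<dots> = mat_trace (?B\<^sup>T * (L * D * L\<^sup>T * ?B))"
    using H B BT by (intro mat_trace_mult_comm[of _ n n]) (meson mult_carrier_mat)+
  also have "?B\<^sup>T * (L * D * L\<^sup>T * ?B) = P\<^sup>T * (D * P)"
    unfolding P_def using L D B LT
    by (simp add: transpose_mult[OF LT B] assoc_mult_mat[of _ n n _ n _ n] mult_carrier_mat[of _ n n])
  finally show ?thesis .
qed

theorem mainTheorem2:
  fixes n :: nat and H L D :: "real mat"
  assumes "psd_mat H n"
    and "unit_upper_triangular L n"
    and "D \<in> carrier_mat n n" and "diagonal_mat D" and "\<forall>i<n. 0 \<le> D $$ (i, i)"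
    and "H = L * D * L\<^sup>T"
  shows "(\<forall>a. (\<forall>k<n. a k \<in> carrier_vec n) \<longrightarrow> ell n H (col L) \<le> ell n H a)
     \<and> ell n H (col L) = mat_trace D"
proof -
  have L: "L \<in> carrier_mat n n"
    using assms(2) by (simp add: unit_upper_triangular_def)
  have attained: "ell n H (col L) = mat_trace D"
    using ell_LDLT[OF L assms(3), of "col L"] Sigma_factor_col_inverse[OF assms(2)] L assms(3,6) by simp
  have "mat_trace D \<le> ell n H a" if a: "\<forall>k<n. a k \<in> carrier_vec n" for a
    unfolding assms(6) ell_LDLT[OF L assms(3) a]
    using L assms(2-5) Sigma_factor_transpose_unit_upper_triangular[OF a]
    by (intro mat_trace_le_diagonal_congruence allI impI transpose_mult_unit_upper_triangular_diag) auto
  then show ?thesis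
    using attained by simp
qed

end
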